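(* Let $m,n\in\mathbb{N}$, $R>0$ and $\varepsilon\in\mathbb{R}$ with $|\varepsilon|\ll_{m,n}R^{-1}$. Let $\xi:=(1+\varepsilon u)(1-\varepsilon v)$ and define $\bar\Phi:\mathfrak{D}\cap\{r<R\}\to\mathfrak{D}$ in null coordinates by \[ \bar\Phi(u,v,\omega_x,\omega_t):=\big(u(1+\varepsilon u)^{-1},\ v(1-\varepsilon v)^{-1},\ \omega_x,\ \omega_t\big). \] Then $\tau\circ\bar\Phi=\xi^{-1}\tau$, $f\circ\bar\Phi=\xi^{-1}f$, $\bar\rho\circ\bar\Phi=\xi^{-1}r$, and $\bar\Phi$ is a conformal isometry between $\mathfrak{D}\cap\{r<R\}$ and an open subset of $\mathfrak{D}$; specifically, the pull-back satisfies $\bar\Phi^*\bar g=\xi^{-2}g$ on $\mathfrak{D}\cap\{r<R\}$.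
   Context: On $\mathbb{R}^{m+n}$ with Cartesian coordinates $t\in\mathbb{R}^m$, $x\in\mathbb{R}^n$: $g=-\sum dt_i^2+\sum dx_j^2$, $r=|x|$, $\tau=|t|$, $u=\frac12(\tau-r)$, $v=\frac12(\tau+r)$, $f=-uv=\frac14(|x|^2-|t|^2)$, $\mathfrak{D}=\{f>0\}$; null coordinates $(u,v,\omega_x,\omega_t)$ with $\omega_x=x/|x|\in\mathbb{S}^{n-1}$, $\omega_t=t/|t|\in\mathbb{S}^{m-1}$, in which $g=-4\,du\,dv+r^2\mathring\gamma_{\mathbb{S}^{n-1}}-\tau^2\mathring\gamma_{\mathbb{S}^{m-1}}$. The warped radius is $\bar\rho=r+2\varepsilon f$ and the $\varepsilon$-warped metric is $\bar g=-4\,du\,dv+\bar\rho^2\mathring\gamma_{\mathbb{S}^{n-1}}-\tau^2\mathring\gamma_{\mathbb{S}^{m-1}}$. The notation $|\varepsilon|\ll_{m,n}R^{-1}$ means $|\varepsilon|\le cR^{-1}$ for a sufficiently small constant $c$ depending on $m,n$. *)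

theory Defs
  imports "HOL-Analysis.Analysis"
begin

text \<open>Points of R^(m+n) are pairs (t, x) with t in R^m, x in R^n.
  The dimensions m, n are the cardinalities of the finite index types 'm, 'n.\<close>

type_synonym ('m, 'n) pt = "(real ^ 'm) \<times> (real ^ 'n)"

definition tau :: "('m::finite, 'n::finite) pt \<Rightarrow> real" where
  "tau p = norm (fst p)"

definition rr :: "('m::finite, 'n::finite) pt \<Rightarrow> real" where
  "rr p = norm (snd p)"

definition uu :: "('m::finite, 'n::finite) pt \<Rightarrow> real" where
  "uu p = (tau p - rr p) / 2"

definition vv :: "('m::finite, 'n::finite) pt \<Rightarrow> real" where
  "vv p = (tau p + rr p) / 2"

definition ff :: "('m::finite, 'n::finite) pt \<Rightarrow> real" where
  "ff p = - (uu p * vv p)"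

definition DD :: "('m::finite, 'n::finite) pt set" where
  "DD = {p. ff p > 0}"

definition omega_x :: "('m::finite, 'n::finite) pt \<Rightarrow> real ^ 'n" where
  "omega_x p = sgn (snd p)"

definition omega_t :: "('m::finite, 'n::finite) pt \<Rightarrow> real ^ 'm" where
  "omega_t p = sgn (fst p)"

text \<open>Inverse of the null coordinate chart: (u, v, omega_x, omega_t) gives
  t = tau * omega_t, x = r * omega_x with tau = u + v, r = v - u.\<close>
definition from_null :: "real \<Rightarrow> real \<Rightarrow> real ^ 'n \<Rightarrow> real ^ 'm \<Rightarrow> ('m::finite, 'n::finite) pt" where
  "from_null u v wx wt = ((u + v) *\<^sub>R wt, (v - u) *\<^sub>R wx)"

definition rhobar :: "real \<Rightarrow> ('m::finite, 'n::finite) pt \<Rightarrow> real" where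
  "rhobar \<epsilon> p = rr p + 2 * \<epsilon> * ff p"

definition xi :: "real \<Rightarrow> ('m::finite, 'n::finite) pt \<Rightarrow> real" where
  "xi \<epsilon> p = (1 + \<epsilon> * uu p) * (1 - \<epsilon> * vv p)"

definition Phibar :: "real \<Rightarrow> ('m::finite, 'n::finite) pt \<Rightarrow> ('m, 'n) pt" where
  "Phibar \<epsilon> p = from_null (uu p / (1 + \<epsilon> * uu p)) (vv p / (1 - \<epsilon> * vv p))
                            (omega_x p) (omega_t p)"

definition gmink :: "('m::finite, 'n::finite) pt \<Rightarrow> ('m, 'n) pt \<Rightarrow> real" where
  "gmink w w' = - (fst w \<bullet> fst w') + snd w \<bullet> snd w'"

text \<open>Differentials at the point p (with x \<noteq> 0) of r and of omega_x, applied to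
  the x-component b of a tangent vector.\<close>
definition dr :: "('m::finite, 'n::finite) pt \<Rightarrow> real ^ 'n \<Rightarrow> real" where
  "dr p b = (snd p \<bullet> b) / rr p"

definition domega_x :: "('m::finite, 'n::finite) pt \<Rightarrow> real ^ 'n \<Rightarrow> real ^ 'n" where
  "domega_x p b = (1 / rr p) *\<^sub>R (b - (omega_x p \<bullet> b) *\<^sub>R omega_x p)"

text \<open>The epsilon-warped metric
   gbar = -4 du dv + rhobar^2 gamma_{S^{n-1}} - tau^2 gamma_{S^{m-1}},
  written in Cartesian coordinates: -4 du dv - tau^2 gamma_{S^{m-1}} = -|dt|^2 + dr^2
  (polar coordinates in t), and gamma_{S^{n-1}} is the round metric (induced from
  the ambient inner product) pulled back by omega_x.\<close>
definition gbar :: "real \<Rightarrow> ('m::finite, 'n::finite) pt \<Rightarrow> ('m, 'n) pt \<Rightarrow> ('m, 'n) pt \<Rightarrow> real" where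
  "gbar \<epsilon> p w w' =
     - (fst w \<bullet> fst w') + dr p (snd w) * dr p (snd w')
     + (rhobar \<epsilon> p)\<^sup>2 * (domega_x p (snd w) \<bullet> domega_x p (snd w'))"

end

theory Submission
  imports Defs
begin

(* In null coordinates Phibar is the product of the Moebius maps u \<mapsto> u/(1 + \<epsilon>u) and
   v \<mapsto> v/(1 - \<epsilon>v), fixing both angles.  Hence tau = u + v and f = -uv get divided by \<xi>,
   the warped radius of the image point is r/\<xi>, and Phibar at -\<epsilon> inverts Phibar at \<epsilon>.
   In Cartesian form Phibar (t, x) = (t/\<xi>, ((r - 2\<epsilon>f)/\<xi>) \<omega>_x).  In polar coordinates for x,
   gbar = -|dt|^2 + dr^2 + rhobar^2 |d\<omega>_x|^2 and g = -|dt|^2 + dr^2 + r^2 |d\<omega>_x|^2; the angular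
   parts match because rhobar \<circ> Phibar = r/\<xi>, and the map (t, r) \<mapsto> (t/\<xi>, (r - 2\<epsilon>f)/\<xi>)
   scales -|dt|^2 + dr^2 by \<xi>^-2, which is a polynomial identity.  The image is open by invariance
   of domain. *)

lemma tau_eq_uu_plus_vv: "tau p = uu p + vv p"
  by (simp add: uu_def vv_def field_simps)

lemma rr_eq_vv_minus_uu: "rr p = vv p - uu p"
  by (simp add: uu_def vv_def field_simps)

lemma ff_eq_inner: "ff p = (snd p \<bullet> snd p - fst p \<bullet> fst p) / 4"
  unfolding ff_def uu_def vv_def tau_def rr_def
  by (simp add: power2_norm_eq_inner[symmetric] field_simps power2_eq_square)

lemma xi_eq: "xi \<epsilon> p = 1 - \<epsilon> * rr p + \<epsilon>\<^sup>2 * ff p"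
  by (simp add: xi_def ff_def rr_eq_vv_minus_uu algebra_simps power2_eq_square)

lemma rhobar_eq_uu_vv: "rhobar \<epsilon> p = vv p - uu p - 2 * \<epsilon> * uu p * vv p"
  by (simp add: rhobar_def ff_def rr_eq_vv_minus_uu)

lemma DD_uu_neg_vv_pos:
  assumes "p \<in> DD"
  shows "uu p < 0" "0 < vv p"
proof -
  have "uu p * vv p < 0" "uu p \<le> vv p"
    using assms by (auto simp: DD_def ff_def uu_def vv_def rr_def)
  then show "uu p < 0" "0 < vv p"
    by (auto simp: mult_less_0_iff)
qed

lemma DD_snd_nonzero: "p \<in> DD \<Longrightarrow> snd p \<noteq> 0"
  using DD_uu_neg_vv_pos[of p] rr_eq_vv_minus_uu[of p] by (auto simp: rr_def)

lemma open_DD: "open DD"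
proof -
  have "continuous_on UNIV ff"
    unfolding ff_eq_inner[abs_def] by (intro continuous_intros) simp
  then show ?thesis
    unfolding DD_def by (rule open_Collect_less[OF continuous_on_const])
qed

definition Phibar_domain :: "real \<Rightarrow> ('m::finite, 'n::finite) pt set" where
  "Phibar_domain \<epsilon> = {p \<in> DD. 1 + \<epsilon> * uu p > 0 \<and> 1 - \<epsilon> * vv p > 0}"

lemma DD_in_Phibar_domain:
  assumes "p \<in> DD" "\<bar>\<epsilon>\<bar> * rr p < 1"
  shows "p \<in> Phibar_domain \<epsilon>"
proof -
  have "\<bar>uu p\<bar> \<le> rr p" "\<bar>vv p\<bar> \<le> rr p"
    using DD_uu_neg_vv_pos [OF assms(1)] by (auto simp: rr_eq_vv_minus_uu)
  then have "\<bar>\<epsilon>\<bar> * \<bar>uu p\<bar> < 1" "\<bar>\<epsilon>\<bar> * \<bar>vv p\<bar> < 1"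
    using assms(2) mult_left_mono [of _ "rr p" "\<bar>\<epsilon>\<bar>"] by fastforce+
  then have "\<bar>\<epsilon> * uu p\<bar> < 1" "\<bar>\<epsilon> * vv p\<bar> < 1"
    by (simp_all add: abs_mult)
  then show ?thesis
    using assms(1) by (auto simp: Phibar_domain_def)
qed

lemma sgn_sgn_vector: "sgn (sgn x) = (sgn x :: 'a::real_normed_vector)"
  by (simp add: sgn_div_norm [of "sgn x"] norm_sgn)

lemma rr_scaleR_omega_x: "rr p *\<^sub>R omega_x p = snd p"
  by (cases "snd p = 0") (simp_all add: rr_def omega_x_def sgn_div_norm)

(* rhobar (-\<epsilon>) p = r - 2\<epsilon>f is the radius of the image point, see rr_Phibar below. *)
lemma Phibar_eq:
  assumes "1 + \<epsilon> * uu p \<noteq> 0" "1 - \<epsilon> * vv p \<noteq> 0"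
  shows "Phibar \<epsilon> p = ((1 / xi \<epsilon> p) *\<^sub>R fst p, (rhobar (-\<epsilon>) p / xi \<epsilon> p) *\<^sub>R omega_x p)"
proof -
  have sum: "uu p / (1 + \<epsilon> * uu p) + vv p / (1 - \<epsilon> * vv p) = tau p / xi \<epsilon> p"
    using assms by (simp add: xi_def tau_eq_uu_plus_vv field_simps)
  have diff: "vv p / (1 - \<epsilon> * vv p) - uu p / (1 + \<epsilon> * uu p) = rhobar (-\<epsilon>) p / xi \<epsilon> p"
    using assms by (simp add: xi_def rhobar_eq_uu_vv field_simps)
  have "(tau p / xi \<epsilon> p) *\<^sub>R omega_t p = (1 / xi \<epsilon> p) *\<^sub>R fst p"
    by (cases "fst p = 0") (simp_all add: tau_def omega_t_def sgn_div_norm)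
  then show ?thesis
    unfolding Phibar_def from_null_def sum diff by simp
qed

definition dff :: "('m::finite, 'n::finite) pt \<Rightarrow> ('m, 'n) pt \<Rightarrow> real" where
  "dff p w = (snd p \<bullet> snd w - fst p \<bullet> fst w) / 2"

definition dxi :: "real \<Rightarrow> ('m::finite, 'n::finite) pt \<Rightarrow> ('m, 'n) pt \<Rightarrow> real" where
  "dxi \<epsilon> p w = - \<epsilon> * dr p (snd w) + \<epsilon>\<^sup>2 * dff p w"

definition drhobar :: "real \<Rightarrow> ('m::finite, 'n::finite) pt \<Rightarrow> ('m, 'n) pt \<Rightarrow> real" where
  "drhobar \<epsilon> p w = dr p (snd w) + 2 * \<epsilon> * dff p w"

definition DPhibar :: "real \<Rightarrow> ('m::finite, 'n::finite) pt \<Rightarrow> ('m, 'n) pt \<Rightarrow> ('m, 'n) pt" where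
  "DPhibar \<epsilon> p w =
    ((1 / xi \<epsilon> p) *\<^sub>R fst w - (dxi \<epsilon> p w / (xi \<epsilon> p)\<^sup>2) *\<^sub>R fst p,
     ((drhobar (-\<epsilon>) p w * xi \<epsilon> p - rhobar (-\<epsilon>) p * dxi \<epsilon> p w) / (xi \<epsilon> p)\<^sup>2) *\<^sub>R omega_x p
       + (rhobar (-\<epsilon>) p / xi \<epsilon> p) *\<^sub>R domega_x p (snd w))"

lemma ff_has_derivative: "(ff has_derivative dff p) (at p)"
  unfolding ff_eq_inner [abs_def] dff_def [abs_def]
  by (auto intro!: derivative_eq_intros simp: inner_commute field_simps)

lemma rr_has_derivative:
  assumes "snd p \<noteq> 0"
  shows "(rr has_derivative (\<lambda>w. dr p (snd w))) (at p)"
proof -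
  have "((\<lambda>q. norm (snd q)) has_derivative (\<lambda>w. snd w \<bullet> sgn (snd p))) (at p)"
    by (rule has_derivative_compose [OF has_derivative_snd [OF has_derivative_ident]
          has_derivative_norm [OF assms], unfolded o_def])
  then show ?thesis
    by (simp add: rr_def [abs_def] dr_def sgn_div_norm inner_commute divide_inverse mult.commute)
qed

lemma omega_x_has_derivative:
  fixes p :: "('m::finite, 'n::finite) pt"
  assumes "snd p \<noteq> 0"
  shows "(omega_x has_derivative (\<lambda>w. domega_x p (snd w))) (at p)"
proof -
  have "norm (snd p) \<noteq> 0"
    using assms by simp
  then have r: "rr p \<noteq> 0"
    by (simp add: rr_def)
  have deriv: "((\<lambda>q. (1 / rr q) *\<^sub>R snd q) has_derivative
      (\<lambda>w. (1 / rr p) *\<^sub>R snd w - (dr p (snd w) / (rr p)\<^sup>2) *\<^sub>R snd p)) (at p)"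
    using r by (auto intro!: derivative_eq_intros rr_has_derivative [OF assms]
        simp: field_simps power2_eq_square)
  have "(1 / rr p) *\<^sub>R b - (dr p b / (rr p)\<^sup>2) *\<^sub>R snd p = domega_x p b" for b
    using \<open>norm (snd p) \<noteq> 0\<close>
    by (simp add: domega_x_def dr_def omega_x_def rr_def sgn_div_norm
        inner_commute algebra_simps power2_eq_square field_simps)
  moreover have "omega_x = (\<lambda>q :: ('m, 'n) pt. (1 / rr q) *\<^sub>R snd q)"
    by (simp add: fun_eq_iff omega_x_def rr_def sgn_div_norm divide_inverse)
  ultimately show ?thesis
    using deriv by (simp only:)
qed

lemma xi_has_derivative:
  assumes "snd p \<noteq> 0"
  shows "(xi \<epsilon> has_derivative dxi \<epsilon> p) (at p)"
  unfolding xi_eq [abs_def] dxi_def [abs_def]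
  by (auto intro!: derivative_eq_intros rr_has_derivative [OF assms] ff_has_derivative)

lemma rhobar_has_derivative:
  assumes "snd p \<noteq> 0"
  shows "(rhobar \<epsilon> has_derivative drhobar \<epsilon> p) (at p)"
  unfolding rhobar_def [abs_def] drhobar_def [abs_def]
  by (auto intro!: derivative_eq_intros rr_has_derivative [OF assms] ff_has_derivative)

lemma Phibar_has_derivative:
  assumes "snd p \<noteq> 0" "1 + \<epsilon> * uu p \<noteq> 0" "1 - \<epsilon> * vv p \<noteq> 0"
  shows "(Phibar \<epsilon> has_derivative DPhibar \<epsilon> p) (at p)"
proof -
  let ?U = "{q. snd q \<noteq> 0 \<and> 1 + \<epsilon> * uu q \<noteq> 0 \<and> 1 - \<epsilon> * vv q \<noteq> 0}"
  have "continuous_on UNIV uu" "continuous_on UNIV vv"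
    unfolding uu_def [abs_def] vv_def [abs_def] tau_def [abs_def] rr_def [abs_def]
    by (intro continuous_intros; simp)+
  then have "open ?U"
    by (intro open_Collect_conj open_Collect_neq continuous_intros) auto
  have "xi \<epsilon> p \<noteq> 0"
    using assms by (simp add: xi_def)
  then have "((\<lambda>q. ((1 / xi \<epsilon> q) *\<^sub>R fst q, (rhobar (-\<epsilon>) q / xi \<epsilon> q) *\<^sub>R omega_x q))
      has_derivative DPhibar \<epsilon> p) (at p)"
    unfolding DPhibar_def [abs_def]
    by (auto intro!: derivative_eq_intros xi_has_derivative rhobar_has_derivative
        omega_x_has_derivative assms(1) simp: field_simps power2_eq_square)
  then show ?thesis
    by (rule has_derivative_transform_within_open [OF _ \<open>open ?U\<close>])
      (use assms in \<open>auto simp: Phibar_eq\<close>)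
qed

lemma inner_unit_orthogonal_decomposition:
  fixes e d d' :: "'a::real_inner"
  assumes "norm e = 1" "e \<bullet> d = 0" "e \<bullet> d' = 0"
  shows "(c *\<^sub>R e + d) \<bullet> (c' *\<^sub>R e + d') = c * c' + d \<bullet> d'"
proof -
  have "e \<bullet> e = 1"
    using assms(1) by (simp add: norm_eq_1)
  then show ?thesis
    using assms(2,3) by (simp add: inner_add_left inner_add_right inner_commute [of d e])
qed

lemma norm_omega_x: "snd p \<noteq> 0 \<Longrightarrow> norm (omega_x p) = 1"
  by (simp add: omega_x_def norm_sgn)

lemma omega_x_inner_domega_x: "omega_x p \<bullet> domega_x p b = 0"
proof (cases "snd p = 0")
  case False
  then have "omega_x p \<bullet> omega_x p = 1"
    using norm_omega_x by (simp add: norm_eq_1)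
  then show ?thesis
    by (simp add: domega_x_def inner_diff_right)
qed (simp add: omega_x_def)

lemma snd_polar_decomposition:
  assumes "snd p \<noteq> 0"
  shows "b = dr p b *\<^sub>R omega_x p + rr p *\<^sub>R domega_x p b"
proof -
  have "rr p \<noteq> 0"
    using assms by (simp add: rr_def)
  moreover have "dr p b = omega_x p \<bullet> b"
    by (simp add: dr_def omega_x_def rr_def sgn_div_norm divide_inverse mult.commute)
  ultimately show ?thesis
    by (simp add: domega_x_def)
qed

lemma gmink_polar:
  assumes "snd p \<noteq> 0"
  shows "gmink w w' = - (fst w \<bullet> fst w') + dr p (snd w) * dr p (snd w')
    + (rr p)\<^sup>2 * (domega_x p (snd w) \<bullet> domega_x p (snd w'))"
proof -
  have "snd w \<bullet> snd w' = dr p (snd w) * dr p (snd w') + (rr p)\<^sup>2 * (domega_x p (snd w) \<bullet> domega_x p (snd w'))"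
    by (subst (1 2) snd_polar_decomposition [OF assms], subst inner_unit_orthogonal_decomposition)
      (simp_all add: norm_omega_x [OF assms] omega_x_inner_domega_x power2_eq_square)
  then show ?thesis
    by (simp add: gmink_def)
qed

lemma gbar_polar:
  assumes "snd q = \<sigma> *\<^sub>R e" "\<sigma> > 0" "norm e = 1" "e \<bullet> d = 0" "e \<bullet> d' = 0"
  shows "gbar \<epsilon> q (A, c *\<^sub>R e + \<sigma> *\<^sub>R d) (A', c' *\<^sub>R e + \<sigma> *\<^sub>R d')
    = - (A \<bullet> A') + c * c' + (rhobar \<epsilon> q)\<^sup>2 * (d \<bullet> d')"
proof -
  have "rr q = \<sigma>" "omega_x q = e"
    using assms(1-3) by (simp_all add: rr_def omega_x_def sgn_scaleR sgn_div_norm)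
  moreover have "e \<bullet> e = 1"
    using assms(3) by (simp add: norm_eq_1)
  ultimately
  have "dr q (k *\<^sub>R e + \<sigma> *\<^sub>R z) = k \<and> domega_x q (k *\<^sub>R e + \<sigma> *\<^sub>R z) = z"
    if "e \<bullet> z = 0" for k z
    using assms(1,2) that by (simp add: dr_def domega_x_def inner_add_right)
  then show ?thesis
    using assms(4,5) by (simp add: gbar_def)
qed

(* The (t, r)-block of the conformality: a, a' are the t-components and \<beta>, \<beta>' the dr-values of
   two tangent vectors, and \<delta>, D\<xi>, DH the corresponding differentials of f, \<xi> and H = r - 2\<epsilon>f.
   The claim is that (t, r) \<mapsto> (t/\<xi>, H/\<xi>) pulls -|dt|^2 + dr^2 back to \<xi>^-2 (-|dt|^2 + dr^2). *)
lemma time_radial_conformal: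
  fixes t a a' :: "'a::real_inner"
  assumes "\<xi> \<noteq> 0"
    and f: "f = (r\<^sup>2 - t \<bullet> t) / 4" and \<xi>: "\<xi> = 1 - \<epsilon> * r + \<epsilon>\<^sup>2 * f" and H: "H = r - 2 * \<epsilon> * f"
    and \<delta>: "\<delta> = (r * \<beta> - t \<bullet> a) / 2" and D\<xi>: "D\<xi> = - \<epsilon> * \<beta> + \<epsilon>\<^sup>2 * \<delta>" and DH: "DH = \<beta> - 2 * \<epsilon> * \<delta>"
    and \<delta>': "\<delta>' = (r * \<beta>' - t \<bullet> a') / 2" and D\<xi>': "D\<xi>' = - \<epsilon> * \<beta>' + \<epsilon>\<^sup>2 * \<delta>'" and DH': "DH' = \<beta>' - 2 * \<epsilon> * \<delta>'"
  shows "- (((1 / \<xi>) *\<^sub>R a - (D\<xi> / \<xi>\<^sup>2) *\<^sub>R t) \<bullet> ((1 / \<xi>) *\<^sub>R a' - (D\<xi>' / \<xi>\<^sup>2) *\<^sub>R t))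
      + ((DH * \<xi> - H * D\<xi>) / \<xi>\<^sup>2) * ((DH' * \<xi> - H * D\<xi>') / \<xi>\<^sup>2)
    = (- (a \<bullet> a') + \<beta> * \<beta>') / \<xi>\<^sup>2"
proof -
  have polynomial: "\<xi> * (D\<xi>' * (t \<bullet> a) + D\<xi> * (t \<bullet> a')) - D\<xi> * D\<xi>' * (t \<bullet> t)
      + (DH * \<xi> - H * D\<xi>) * (DH' * \<xi> - H * D\<xi>') = \<beta> * \<beta>' * \<xi>\<^sup>2"
    unfolding \<xi> H D\<xi> DH D\<xi>' DH' \<delta> \<delta>' f by (simp add: field_simps power2_eq_square)
  have inner: "((1 / \<xi>) *\<^sub>R a - (D\<xi> / \<xi>\<^sup>2) *\<^sub>R t) \<bullet> ((1 / \<xi>) *\<^sub>R a' - (D\<xi>' / \<xi>\<^sup>2) *\<^sub>R t)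
      = (a \<bullet> a') / \<xi>\<^sup>2 - (\<xi> * (D\<xi>' * (t \<bullet> a) + D\<xi> * (t \<bullet> a')) - D\<xi> * D\<xi>' * (t \<bullet> t)) / (\<xi>\<^sup>2)\<^sup>2"
    using \<open>\<xi> \<noteq> 0\<close>
    by (simp add: inner_diff_left inner_diff_right inner_commute [of a t] field_simps power2_eq_square)
  have "- (A / \<xi>\<^sup>2 - P / (\<xi>\<^sup>2)\<^sup>2) + (X / \<xi>\<^sup>2) * (Y / \<xi>\<^sup>2) = (- A + B) / \<xi>\<^sup>2"
    if "P + X * Y = B * \<xi>\<^sup>2" for A P X Y B :: real
    using that \<open>\<xi> \<noteq> 0\<close> by (simp add: field_simps power2_eq_square)
  from this [OF polynomial] show ?thesis
    unfolding inner .
qed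

context
  fixes \<epsilon> :: real and p :: "('m::finite, 'n::finite) pt"
  assumes p_DD: "p \<in> DD" and warp_u: "1 + \<epsilon> * uu p > 0" and warp_v: "1 - \<epsilon> * vv p > 0"
begin

lemma xi_pos: "xi \<epsilon> p > 0"
  using warp_u warp_v by (simp add: xi_def)

lemma rhobar_neg_pos: "rhobar (-\<epsilon>) p > 0"
proof -
  have "uu p * (1 - \<epsilon> * vv p) < 0" "0 < vv p * (1 + \<epsilon> * uu p)"
    using DD_uu_neg_vv_pos[OF p_DD] warp_u warp_v by (simp_all add: mult_neg_pos)
  then show ?thesis
    by (simp add: rhobar_eq_uu_vv algebra_simps)
qed

lemma fst_Phibar: "fst (Phibar \<epsilon> p) = (1 / xi \<epsilon> p) *\<^sub>R fst p"
  using Phibar_eq[of \<epsilon> p] warp_u warp_v by force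

lemma snd_Phibar: "snd (Phibar \<epsilon> p) = (rhobar (-\<epsilon>) p / xi \<epsilon> p) *\<^sub>R omega_x p"
  using Phibar_eq[of \<epsilon> p] warp_u warp_v by force

lemma tau_Phibar: "tau (Phibar \<epsilon> p) = tau p / xi \<epsilon> p"
  using fst_Phibar xi_pos by (simp add: tau_def)

lemma rr_Phibar: "rr (Phibar \<epsilon> p) = rhobar (-\<epsilon>) p / xi \<epsilon> p"
  using snd_Phibar xi_pos rhobar_neg_pos DD_snd_nonzero[OF p_DD]
  by (simp add: rr_def omega_x_def norm_sgn)

lemma omega_x_Phibar: "omega_x (Phibar \<epsilon> p) = omega_x p"
  using snd_Phibar xi_pos rhobar_neg_pos by (simp add: omega_x_def sgn_scaleR sgn_sgn_vector)

lemma uu_Phibar: "uu (Phibar \<epsilon> p) = uu p / (1 + \<epsilon> * uu p)"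
proof -
  have "uu (Phibar \<epsilon> p) = (tau p - rhobar (-\<epsilon>) p) / (2 * xi \<epsilon> p)"
    by (simp add: uu_def [of "Phibar \<epsilon> p"] tau_Phibar rr_Phibar diff_divide_distrib)
  also have "tau p - rhobar (-\<epsilon>) p = 2 * uu p * (1 - \<epsilon> * vv p)"
    by (simp add: tau_eq_uu_plus_vv rhobar_eq_uu_vv algebra_simps)
  finally show ?thesis
    using warp_v by (simp add: xi_def)
qed

lemma vv_Phibar: "vv (Phibar \<epsilon> p) = vv p / (1 - \<epsilon> * vv p)"
proof -
  have "vv (Phibar \<epsilon> p) = (tau p + rhobar (-\<epsilon>) p) / (2 * xi \<epsilon> p)"
    by (simp add: vv_def [of "Phibar \<epsilon> p"] tau_Phibar rr_Phibar add_divide_distrib)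
  also have "tau p + rhobar (-\<epsilon>) p = 2 * vv p * (1 + \<epsilon> * uu p)"
    by (simp add: tau_eq_uu_plus_vv rhobar_eq_uu_vv algebra_simps)
  finally show ?thesis
    using warp_u by (simp add: xi_def)
qed

lemma ff_Phibar: "ff (Phibar \<epsilon> p) = ff p / xi \<epsilon> p"
  by (simp add: ff_def uu_Phibar vv_Phibar xi_def)

lemma rhobar_Phibar: "rhobar \<epsilon> (Phibar \<epsilon> p) = rr p / xi \<epsilon> p"
  by (simp add: rhobar_def [of \<epsilon> "Phibar \<epsilon> p"] rr_Phibar ff_Phibar)
     (simp add: rhobar_def flip: add_divide_distrib)

lemma Phibar_in_DD: "Phibar \<epsilon> p \<in> DD"
  using p_DD xi_pos by (simp add: DD_def ff_Phibar)

lemma gbar_Phibar: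
  "gbar \<epsilon> (Phibar \<epsilon> p) (DPhibar \<epsilon> p w) (DPhibar \<epsilon> p w') = gmink w w' / (xi \<epsilon> p)\<^sup>2"
proof -
  let ?\<xi> = "xi \<epsilon> p" and ?H = "rhobar (-\<epsilon>) p" and ?r = "rr p"
  have x: "snd p \<noteq> 0"
    using DD_snd_nonzero [OF p_DD] .
  then have r: "?r \<noteq> 0"
    by (simp add: rr_def)
  have inner_x: "snd p \<bullet> b = ?r * dr p b" for b
    using r by (simp add: dr_def)
  have \<xi>: "?\<xi> = 1 - \<epsilon> * ?r + \<epsilon>\<^sup>2 * ff p" and H: "?H = ?r - 2 * \<epsilon> * ff p"
    by (simp_all add: xi_eq rhobar_def)
  have f: "ff p = (?r\<^sup>2 - fst p \<bullet> fst p) / 4"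
    by (simp add: ff_eq_inner rr_def power2_norm_eq_inner)
  have \<delta>: "dff p v = (?r * dr p (snd v) - fst p \<bullet> fst v) / 2" for v
    by (simp add: dff_def inner_x)
  have D\<xi>: "dxi \<epsilon> p v = - \<epsilon> * dr p (snd v) + \<epsilon>\<^sup>2 * dff p v"
    and DH: "drhobar (-\<epsilon>) p v = dr p (snd v) - 2 * \<epsilon> * dff p v" for v
    by (simp_all add: dxi_def drhobar_def)
  have block: "- (fst (DPhibar \<epsilon> p w) \<bullet> fst (DPhibar \<epsilon> p w'))
      + ((drhobar (-\<epsilon>) p w * ?\<xi> - ?H * dxi \<epsilon> p w) / ?\<xi>\<^sup>2)
      * ((drhobar (-\<epsilon>) p w' * ?\<xi> - ?H * dxi \<epsilon> p w') / ?\<xi>\<^sup>2)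
      = (- (fst w \<bullet> fst w') + dr p (snd w) * dr p (snd w')) / ?\<xi>\<^sup>2"
    unfolding DPhibar_def fst_conv
    by (rule time_radial_conformal [OF _ f \<xi> H \<delta> D\<xi> DH \<delta> D\<xi> DH]) (use xi_pos in simp)
  have "gbar \<epsilon> (Phibar \<epsilon> p) (DPhibar \<epsilon> p w) (DPhibar \<epsilon> p w')
      = - (fst (DPhibar \<epsilon> p w) \<bullet> fst (DPhibar \<epsilon> p w'))
      + ((drhobar (-\<epsilon>) p w * ?\<xi> - ?H * dxi \<epsilon> p w) / ?\<xi>\<^sup>2)
      * ((drhobar (-\<epsilon>) p w' * ?\<xi> - ?H * dxi \<epsilon> p w') / ?\<xi>\<^sup>2)
      + (?r / ?\<xi>)\<^sup>2 * (domega_x p (snd w) \<bullet> domega_x p (snd w'))"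
    unfolding DPhibar_def [of \<epsilon> p w] DPhibar_def [of \<epsilon> p w'] rhobar_Phibar [symmetric] fst_conv
    by (rule gbar_polar [OF snd_Phibar])
      (use xi_pos rhobar_neg_pos in \<open>simp_all add: norm_omega_x [OF x] omega_x_inner_domega_x\<close>)
  also have "\<dots> = gmink w w' / ?\<xi>\<^sup>2"
    unfolding block gmink_polar [OF x] by (simp add: power_divide add_divide_distrib)
  finally show ?thesis .
qed

end

lemma Phibar_inverse:
  assumes "p \<in> Phibar_domain \<epsilon>"
  shows "Phibar (-\<epsilon>) (Phibar \<epsilon> p) = p"
proof -
  let ?q = "Phibar \<epsilon> p"
  have p: "p \<in> DD" "1 + \<epsilon> * uu p > 0" "1 - \<epsilon> * vv p > 0"
    using assms by (simp_all add: Phibar_domain_def)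
  have u: "1 + (-\<epsilon>) * uu ?q = 1 / (1 + \<epsilon> * uu p)"
    and v: "1 - (-\<epsilon>) * vv ?q = 1 / (1 - \<epsilon> * vv p)"
    using p by (simp_all add: uu_Phibar vv_Phibar field_simps)
  then have "xi (-\<epsilon>) ?q = 1 / xi \<epsilon> p"
    by (simp add: xi_def)
  moreover have "1 + (-\<epsilon>) * uu ?q \<noteq> 0" "1 - (-\<epsilon>) * vv ?q \<noteq> 0"
    using u v p by simp_all
  ultimately show ?thesis
    using Phibar_eq [of "-\<epsilon>" ?q] p xi_pos [OF p]
    by (simp add: fst_Phibar rhobar_Phibar omega_x_Phibar rr_scaleR_omega_x)
qed

lemma inj_on_Phibar: "inj_on (Phibar \<epsilon>) (Phibar_domain \<epsilon>)"
  by (rule inj_on_inverseI) (rule Phibar_inverse)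

lemma open_Phibar_image:
  assumes "open S" "S \<subseteq> Phibar_domain \<epsilon>"
  shows "open (Phibar \<epsilon> ` S)"
proof -
  have "(Phibar \<epsilon> has_derivative DPhibar \<epsilon> p) (at p)" if "p \<in> S" for p
    using assms(2) that DD_snd_nonzero [of p]
    by (intro Phibar_has_derivative) (auto simp: Phibar_domain_def)
  then have "continuous_on S (Phibar \<epsilon>)"
    by (rule has_derivative_continuous_on [OF has_derivative_at_withinI])
  then show ?thesis
    using assms(1) inj_on_subset [OF inj_on_Phibar assms(2)] by (rule invariance_of_domain)
qed

theorem proposition3p8:
  shows "\<exists>c::real. c > 0 \<and>
    (\<forall>(R::real) (\<epsilon>::real). R > 0 \<longrightarrow> \<bar>\<epsilon>\<bar> \<le> c / R \<longrightarrow>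
      (let S = (DD :: ('m::finite, 'n::finite) pt set) \<inter> {p. rr p < R} in
        (\<forall>p\<in>S. tau (Phibar \<epsilon> p) = tau p / xi \<epsilon> p) \<and>
        (\<forall>p\<in>S. ff (Phibar \<epsilon> p) = ff p / xi \<epsilon> p) \<and>
        (\<forall>p\<in>S. rhobar \<epsilon> (Phibar \<epsilon> p) = rr p / xi \<epsilon> p) \<and>
        Phibar \<epsilon> ` S \<subseteq> DD \<and>
        open (Phibar \<epsilon> ` S) \<and>
        inj_on (Phibar \<epsilon>) S \<and>
        (\<forall>p\<in>S. \<exists>\<Phi>'. (Phibar \<epsilon> has_derivative \<Phi>') (at p) \<and>
           (\<forall>w w'. gbar \<epsilon> (Phibar \<epsilon> p) (\<Phi>' w) (\<Phi>' w')
                    = gmink w w' / (xi \<epsilon> p)\<^sup>2))))"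
  apply (intro exI [of _ 1] conjI allI impI)
   apply simp
  subgoal premises bounds for R \<epsilon>
  proof -
    define S where "S = (DD :: ('m, 'n) pt set) \<inter> {p. rr p < R}"
    have "\<bar>\<epsilon>\<bar> * rr p < 1" if "p \<in> S" for p
    proof -
      have "\<bar>\<epsilon>\<bar> * rr p \<le> rr p / R"
        using mult_right_mono [OF bounds(2), of "rr p"] by (simp add: rr_def)
      also have "\<dots> < 1"
        using that bounds(1) by (simp add: S_def)
      finally show ?thesis .
    qed
    then have dom: "S \<subseteq> Phibar_domain \<epsilon>"
      by (auto simp: S_def intro: DD_in_Phibar_domain)
    have "open S"
      unfolding S_def rr_def by (intro open_Int open_DD open_Collect_less continuous_intros)
    show ?thesis
      unfolding Let_def S_def [symmetric]
      using open_Phibar_image [OF \<open>open S\<close> dom] inj_on_subset [OF inj_on_Phibar dom] dom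
      by (auto simp: Phibar_domain_def tau_Phibar ff_Phibar rhobar_Phibar Phibar_in_DD gbar_Phibar
          intro!: exI [of _ "DPhibar \<epsilon> _"] Phibar_has_derivative dest: DD_snd_nonzero)
  qed
  done

end
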